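(* Let $X$ be a Hausdorff space and $A\in\mathcal{F}(X)$. The following are equivalent: (a) $A$ is a weak $P$-point in $\mathcal{F}(X)$; (b) $A$ is a weak $P$-point in $\mathcal{F}_n(X)$ for each positive integer $n\geq|A|$; (c) every $x\in A$ is a weak $P$-point of $X$.
   Context: $\mathcal{F}(X)$ is the set of nonempty finite subsets of $X$ and $\mathcal{F}_n(X)$ the set of nonempty subsets with at most $n$ points, with the Vietoris topology (generated by $U^+=\{A: A\subset U\}$ and $U^-=\{A: A\cap U\neq\emptyset\}$ for $U$ open in $X$). A point $p$ of a space $Z$ is a weak $P$-point if $p\notin\overline{N}$ for every countable $N\subset Z-\{p\}$. *)

theory Defs
  imports "HOL-Analysis.Analysis"
begin

definition fin_subsets :: "'a topology \<Rightarrow> 'a set set" where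
  "fin_subsets X = {A. A \<subseteq> topspace X \<and> finite A \<and> A \<noteq> {}}"

definition fin_subsets_le :: "'a topology \<Rightarrow> nat \<Rightarrow> 'a set set" where
  "fin_subsets_le X n = {A \<in> fin_subsets X. card A \<le> n}"

definition vietoris_on :: "'a topology \<Rightarrow> 'a set set \<Rightarrow> 'a set topology" where
  "vietoris_on X S = topology_generated_by
     ({{A \<in> S. A \<subseteq> U} | U. openin X U} \<union> {{A \<in> S. A \<inter> U \<noteq> {}} | U. openin X U})"

definition hyper_F :: "'a topology \<Rightarrow> 'a set topology" where
  "hyper_F X = vietoris_on X (fin_subsets X)"

definition hyper_Fn :: "'a topology \<Rightarrow> nat \<Rightarrow> 'a set topology" where
  "hyper_Fn X n = vietoris_on X (fin_subsets_le X n)"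

definition weak_P_point :: "'b topology \<Rightarrow> 'b \<Rightarrow> bool" where
  "weak_P_point Z p \<longleftrightarrow> p \<in> topspace Z \<and>
     (\<forall>N. countable N \<and> N \<subseteq> topspace Z - {p} \<longrightarrow> p \<notin> Z closure_of N)"

end

theory Submission
  imports Defs
begin

text \<open>
  If every point of the finite set \<open>A\<close> is a weak P-point of \<open>X\<close> and \<open>\<N>\<close> is a countable family
  of finite sets, then \<open>C = \<Union>\<N>\<close> is countable, so each \<open>a \<in> A\<close> has an open neighbourhood \<open>V a\<close>
  meeting \<open>C\<close> at most in \<open>a\<close>. The Vietoris neighbourhood of \<open>A\<close> consisting of the sets contained
  in \<open>\<Union>a\<in>A. V a\<close> and meeting every \<open>V a\<close> then contains no member of \<open>\<N>\<close> other than \<open>A\<close>.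
  Conversely, every Vietoris neighbourhood of \<open>A\<close> contains all sets \<open>insert m (A - {x})\<close> with \<open>m\<close>
  close to \<open>x\<close>, so a countable set \<open>M\<close> accumulating at \<open>x\<close> yields the countable family
  \<open>{insert m (A - {x}) | m \<in> M}\<close> accumulating at \<open>A\<close>. Both arguments work in any subfamily of
  \<open>\<F>(X)\<close> closed under such replacements, in particular in \<open>\<F>(X)\<close> and in \<open>\<F>\<^sub>n(X)\<close> for
  \<open>n \<ge> |A|\<close>.
\<close>

lemma weak_P_point_iff_open_avoiding:
  "weak_P_point Z p \<longleftrightarrow> p \<in> topspace Z \<and>
     (\<forall>N. countable N \<and> N \<subseteq> topspace Z - {p} \<longrightarrow> (\<exists>U. openin Z U \<and> p \<in> U \<and> U \<inter> N = {}))"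
  unfolding weak_P_point_def in_closure_of disjoint_iff by meson

lemma topspace_vietoris_on:
  assumes "S \<subseteq> Pow (topspace X)"
  shows "topspace (vietoris_on X S) = S"
proof -
  have "S \<in> {{A \<in> S. A \<subseteq> U} | U. openin X U}"
    using assms openin_topspace[of X] by blast
  then show ?thesis
    unfolding vietoris_on_def topology_generated_by_topspace by auto
qed

lemma openin_vietoris_upper:
  "openin X U \<Longrightarrow> openin (vietoris_on X S) {A \<in> S. A \<subseteq> U}"
  unfolding vietoris_on_def by (rule topology_generated_by_Basis) blast

lemma openin_vietoris_lower:
  "openin X U \<Longrightarrow> openin (vietoris_on X S) {A \<in> S. A \<inter> U \<noteq> {}}"
  unfolding vietoris_on_def by (rule topology_generated_by_Basis) blast

lemma vietoris_open_replace_point: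
  assumes "openin (vietoris_on X S) W" and "A \<in> W" and "x \<in> A" and "x \<in> topspace X"
  obtains V where "openin X V" and "x \<in> V"
    and "\<And>m. m \<in> V \<Longrightarrow> insert m (A - {x}) \<in> S \<Longrightarrow> insert m (A - {x}) \<in> W"
proof -
  let ?good = "\<lambda>W V. openin X V \<and> x \<in> V \<and>
    (\<forall>m\<in>V. insert m (A - {x}) \<in> S \<longrightarrow> insert m (A - {x}) \<in> W)"
  have "generate_topology_on
      ({{A \<in> S. A \<subseteq> U} | U. openin X U} \<union> {{A \<in> S. A \<inter> U \<noteq> {}} | U. openin X U}) W"
    using assms(1) unfolding vietoris_on_def openin_topology_generated_by_iff .
  then have "A \<in> W \<longrightarrow> (\<exists>V. ?good W V)"
  proof (induction rule: generate_topology_on.induct)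
    case Empty
    show ?case by simp
  next
    case (Int W1 W2)
    show ?case
    proof
      assume "A \<in> W1 \<inter> W2"
      then obtain V1 V2 where "?good W1 V1" and "?good W2 V2"
        using Int.IH by blast
      then have "?good (W1 \<inter> W2) (V1 \<inter> V2)"
        by auto
      then show "\<exists>V. ?good (W1 \<inter> W2) V" ..
    qed
  next
    case (UN \<K>)
    show ?case
    proof
      assume "A \<in> \<Union>\<K>"
      then obtain K where "K \<in> \<K>" and "A \<in> K"
        by blast
      then obtain V where "?good K V"
        using UN.IH by blast
      then have "?good (\<Union>\<K>) V"
        using \<open>K \<in> \<K>\<close> by blast
      then show "\<exists>V. ?good (\<Union>\<K>) V" ..
    qed
  next
    case (Basis B)
    then consider U where "openin X U" "B = {A \<in> S. A \<subseteq> U}"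
      | U where "openin X U" "B = {A \<in> S. A \<inter> U \<noteq> {}}"
      by blast
    then show ?case
    proof cases
      case 1
      then show ?thesis
        using \<open>x \<in> A\<close> by (intro impI exI[of _ U]) auto
    next
      case 2
      show ?thesis
      proof (cases "x \<in> U")
        case True
        then show ?thesis
          using 2 by (intro impI exI[of _ U]) auto
      next
        case False
        then show ?thesis
          using 2 \<open>x \<in> topspace X\<close> by (intro impI exI[of _ "topspace X"]) auto
      qed
    qed
  qed
  then show ?thesis
    using assms(2) that by blast
qed

lemma weak_P_point_vietoris_if_weak_P_points:
  assumes S: "S \<subseteq> fin_subsets X" and "A \<in> S" and weak_P: "\<forall>x\<in>A. weak_P_point X x"
  shows "weak_P_point (vietoris_on X S) A"
  unfolding weak_P_point_iff_open_avoiding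
proof (intro conjI allI impI)
  have S_fin: "\<And>B. B \<in> S \<Longrightarrow> finite B \<and> B \<subseteq> topspace X \<and> B \<noteq> {}"
    using S unfolding fin_subsets_def by auto
  then have top: "topspace (vietoris_on X S) = S"
    by (intro topspace_vietoris_on) blast
  then show "A \<in> topspace (vietoris_on X S)"
    using \<open>A \<in> S\<close> by simp
  fix \<N> assume "countable \<N> \<and> \<N> \<subseteq> topspace (vietoris_on X S) - {A}"
  then have "countable \<N>" and \<N>: "\<N> \<subseteq> S - {A}"
    using top by auto
  define C where "C = \<Union>\<N>"
  have "countable (\<Union>B\<in>\<N>. B)"
    using \<open>countable \<N>\<close> \<N> S_fin by (intro countable_UN) (auto intro: countable_finite)
  then have "countable C"
    unfolding C_def by simp
  have "C \<subseteq> topspace X"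
    unfolding C_def using \<N> S_fin by blast
  have "\<exists>V. openin X V \<and> a \<in> V \<and> V \<inter> C \<subseteq> {a}" if "a \<in> A" for a
  proof -
    have "countable (C - {a}) \<and> C - {a} \<subseteq> topspace X - {a}"
      using \<open>countable C\<close> \<open>C \<subseteq> topspace X\<close> by auto
    moreover have "weak_P_point X a"
      using weak_P that by blast
    ultimately obtain U where "openin X U" "a \<in> U" "U \<inter> (C - {a}) = {}"
      unfolding weak_P_point_iff_open_avoiding by blast
    then show ?thesis
      by blast
  qed
  then obtain V where V: "\<And>a. a \<in> A \<Longrightarrow> openin X (V a) \<and> a \<in> V a \<and> V a \<inter> C \<subseteq> {a}"
    by metis
  have "finite A" "A \<noteq> {}"
    using S_fin \<open>A \<in> S\<close> by auto
  define W where
    "W = {B \<in> S. B \<subseteq> (\<Union>a\<in>A. V a)} \<inter> (\<Inter>a\<in>A. {B \<in> S. B \<inter> V a \<noteq> {}})"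
  have "openin (vietoris_on X S) W"
    unfolding W_def using V \<open>finite A\<close> \<open>A \<noteq> {}\<close>
    by (intro openin_Int openin_vietoris_upper openin_Inter openin_Union)
      (auto intro: openin_vietoris_lower)
  moreover have "A \<in> W"
    unfolding W_def using \<open>A \<in> S\<close> V by auto
  moreover have "W \<inter> \<N> = {}"
  proof (rule ccontr)
    assume "W \<inter> \<N> \<noteq> {}"
    then obtain B where "B \<in> W" "B \<in> \<N>" by blast
    then have "B \<subseteq> C"
      unfolding C_def by blast
    have "B \<subseteq> A"
    proof
      fix b assume "b \<in> B"
      then obtain a where "a \<in> A" "b \<in> V a"
        using \<open>B \<in> W\<close> unfolding W_def by blast
      then show "b \<in> A"
        using V[OF \<open>a \<in> A\<close>] \<open>B \<subseteq> C\<close> \<open>b \<in> B\<close> by blast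
    qed
    moreover have "A \<subseteq> B"
    proof
      fix a assume "a \<in> A"
      then obtain b where "b \<in> B" "b \<in> V a"
        using \<open>B \<in> W\<close> unfolding W_def by blast
      then show "a \<in> B"
        using V[OF \<open>a \<in> A\<close>] \<open>B \<subseteq> C\<close> by blast
    qed
    ultimately have "B = A"
      by blast
    then show False
      using \<open>B \<in> \<N>\<close> \<N> by blast
  qed
  ultimately show "\<exists>W. openin (vietoris_on X S) W \<and> A \<in> W \<and> W \<inter> \<N> = {}"
    by (intro exI[of _ W] conjI)
qed

lemma weak_P_point_if_weak_P_point_vietoris:
  assumes S: "S \<subseteq> Pow (topspace X)" and "x \<in> A"
    and replace: "\<And>m. m \<in> topspace X \<Longrightarrow> insert m (A - {x}) \<in> S"
    and weak_P: "weak_P_point (vietoris_on X S) A"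
  shows "weak_P_point X x"
proof (rule ccontr)
  assume "\<not> weak_P_point X x"
  have top: "topspace (vietoris_on X S) = S"
    using S by (rule topspace_vietoris_on)
  then have "x \<in> topspace X"
    using weak_P S \<open>x \<in> A\<close> unfolding weak_P_point_def by blast
  then obtain M where "countable M" and M: "M \<subseteq> topspace X - {x}" and "x \<in> X closure_of M"
    using \<open>\<not> weak_P_point X x\<close> unfolding weak_P_point_def by blast
  define \<N> where "\<N> = (\<lambda>m. insert m (A - {x})) ` M"
  have "countable \<N>"
    unfolding \<N>_def using \<open>countable M\<close> by simp
  moreover have "\<N> \<subseteq> topspace (vietoris_on X S) - {A}"
    unfolding \<N>_def top
  proof (rule image_subsetI)
    fix m assume "m \<in> M"
    then have "m \<in> topspace X" and "x \<notin> insert m (A - {x})"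
      using M by auto
    then show "insert m (A - {x}) \<in> S - {A}"
      using replace \<open>x \<in> A\<close> by blast
  qed
  moreover have "A \<in> vietoris_on X S closure_of \<N>"
    unfolding in_closure_of
  proof (intro conjI allI impI)
    show "A \<in> topspace (vietoris_on X S)"
      using weak_P unfolding weak_P_point_def by blast
    fix W assume W: "A \<in> W \<and> openin (vietoris_on X S) W"
    obtain V where "openin X V" "x \<in> V"
      and V: "\<And>m. m \<in> V \<Longrightarrow> insert m (A - {x}) \<in> S \<Longrightarrow> insert m (A - {x}) \<in> W"
      using W \<open>x \<in> A\<close> \<open>x \<in> topspace X\<close> vietoris_open_replace_point by metis
    then obtain m where "m \<in> M" "m \<in> V"
      using \<open>x \<in> X closure_of M\<close> unfolding in_closure_of by blast
    then show "\<exists>B. B \<in> \<N> \<and> B \<in> W"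
      unfolding \<N>_def using V replace M by blast
  qed
  ultimately show False
    using weak_P unfolding weak_P_point_def by blast
qed

lemma weak_P_point_vietoris_iff:
  assumes S: "S \<subseteq> fin_subsets X" and "A \<in> S"
    and replace: "\<And>x m. x \<in> A \<Longrightarrow> m \<in> topspace X \<Longrightarrow> insert m (A - {x}) \<in> S"
  shows "weak_P_point (vietoris_on X S) A \<longleftrightarrow> (\<forall>x\<in>A. weak_P_point X x)"
proof
  assume weak_P: "weak_P_point (vietoris_on X S) A"
  have "S \<subseteq> Pow (topspace X)"
    using S unfolding fin_subsets_def by blast
  then show "\<forall>x\<in>A. weak_P_point X x"
    using weak_P_point_if_weak_P_point_vietoris replace weak_P by metis
next
  assume "\<forall>x\<in>A. weak_P_point X x"
  with S \<open>A \<in> S\<close> show "weak_P_point (vietoris_on X S) A"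
    by (rule weak_P_point_vietoris_if_weak_P_points)
qed

lemma insert_Diff_in_fin_subsets_le:
  assumes "A \<in> fin_subsets_le X n" and "x \<in> A" and "m \<in> topspace X"
  shows "insert m (A - {x}) \<in> fin_subsets_le X n"
proof -
  have "finite A"
    using assms(1) unfolding fin_subsets_le_def fin_subsets_def by simp
  have "card (insert m (A - {x})) \<le> Suc (card (A - {x}))"
    using \<open>finite A\<close> by (simp add: card_insert_if)
  also have "\<dots> = card A"
    using \<open>finite A\<close> \<open>x \<in> A\<close> by (rule card_Suc_Diff1)
  also have "\<dots> \<le> n"
    using assms(1) unfolding fin_subsets_le_def by simp
  finally show ?thesis
    using assms unfolding fin_subsets_le_def fin_subsets_def by blast
qed

theorem proposition4p3:
  fixes X :: "'a topology" and A :: "'a set"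
  assumes "Hausdorff_space X" and "A \<in> fin_subsets X"
  shows "(weak_P_point (hyper_F X) A
            \<longleftrightarrow> (\<forall>n::nat. 0 < n \<and> card A \<le> n \<longrightarrow> weak_P_point (hyper_Fn X n) A))
       \<and> ((\<forall>n::nat. 0 < n \<and> card A \<le> n \<longrightarrow> weak_P_point (hyper_Fn X n) A)
            \<longleftrightarrow> (\<forall>x\<in>A. weak_P_point X x))"
proof -
  have F: "weak_P_point (hyper_F X) A \<longleftrightarrow> (\<forall>x\<in>A. weak_P_point X x)"
    unfolding hyper_F_def using \<open>A \<in> fin_subsets X\<close>
    by (intro weak_P_point_vietoris_iff) (auto simp: fin_subsets_def)
  have Fn: "weak_P_point (hyper_Fn X n) A \<longleftrightarrow> (\<forall>x\<in>A. weak_P_point X x)" if "card A \<le> n" for n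
  proof -
    have "A \<in> fin_subsets_le X n"
      using \<open>A \<in> fin_subsets X\<close> that unfolding fin_subsets_le_def by blast
    then show ?thesis
      unfolding hyper_Fn_def
      by (intro weak_P_point_vietoris_iff insert_Diff_in_fin_subsets_le)
        (auto simp: fin_subsets_le_def)
  qed
  have "0 < card A"
    using \<open>A \<in> fin_subsets X\<close> unfolding fin_subsets_def by (simp add: card_gt_0_iff)
  then show ?thesis
    using F Fn by blast
qed

end
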